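(* Let $\mathcal{A}\subseteq\mathcal{B}$ be sub-$\sigma$-algebras of a complete probability space $(\Omega,\mathcal{F},P)$. If $x:L_\infty(\mathcal{B})\to L_\infty(\mathcal{A})$ is a weak $\mathcal{A}$-homogeneous monotone linear operator that is continuous from above, then $x$ is $\mathcal{A}$-homogeneous.
   Context: Weak $\mathcal{A}$-homogeneous: $x(1_AX)=1_Ax(X)$ for all $A\in\mathcal{A}$, $X\in L_\infty(\mathcal{B})$. $\mathcal{A}$-homogeneous: $x(fX)=fx(X)$ for all $f\in L^+_\infty(\mathcal{A})$. Continuous from above: for every nonincreasing sequence $X_n$ with a.s. limit $X$, $x(X_n)\downarrow x(X)$ a.s. *)

theory Defs
  imports "HOL-Probability.Probability"
begin

text \<open>Elements of L-infinity are equivalence classes modulo M-a.s. equality; an operator on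
  classes is modelled as a map on representatives that respects a.s. equality.\<close>
definition Linf :: "'a measure \<Rightarrow> 'a measure \<Rightarrow> ('a \<Rightarrow> real) set" where
  "Linf M F = {X. X \<in> borel_measurable F \<and> (\<exists>C. AE \<omega> in M. \<bar>X \<omega>\<bar> \<le> C)}"

definition Linf_pos :: "'a measure \<Rightarrow> 'a measure \<Rightarrow> ('a \<Rightarrow> real) set" where
  "Linf_pos M F = {f \<in> Linf M F. AE \<omega> in M. 0 \<le> f \<omega>}"

definition Linf_operator ::
  "'a measure \<Rightarrow> 'a measure \<Rightarrow> 'a measure \<Rightarrow> (('a \<Rightarrow> real) \<Rightarrow> ('a \<Rightarrow> real)) \<Rightarrow> bool" where
  "Linf_operator M A B x \<longleftrightarrow>
     (\<forall>X\<in>Linf M B. x X \<in> Linf M A) \<and>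
     (\<forall>X\<in>Linf M B. \<forall>Y\<in>Linf M B. (AE \<omega> in M. X \<omega> = Y \<omega>) \<longrightarrow> (AE \<omega> in M. x X \<omega> = x Y \<omega>))"

definition linear_op ::
  "'a measure \<Rightarrow> 'a measure \<Rightarrow> (('a \<Rightarrow> real) \<Rightarrow> ('a \<Rightarrow> real)) \<Rightarrow> bool" where
  "linear_op M B x \<longleftrightarrow>
     (\<forall>X\<in>Linf M B. \<forall>Y\<in>Linf M B. \<forall>a b::real.
        AE \<omega> in M. x (\<lambda>t. a * X t + b * Y t) \<omega> = a * x X \<omega> + b * x Y \<omega>)"

definition monotone_op ::
  "'a measure \<Rightarrow> 'a measure \<Rightarrow> (('a \<Rightarrow> real) \<Rightarrow> ('a \<Rightarrow> real)) \<Rightarrow> bool" where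
  "monotone_op M B x \<longleftrightarrow>
     (\<forall>X\<in>Linf M B. \<forall>Y\<in>Linf M B. (AE \<omega> in M. X \<omega> \<le> Y \<omega>) \<longrightarrow> (AE \<omega> in M. x X \<omega> \<le> x Y \<omega>))"

definition weak_homogeneous ::
  "'a measure \<Rightarrow> 'a measure \<Rightarrow> 'a measure \<Rightarrow> (('a \<Rightarrow> real) \<Rightarrow> ('a \<Rightarrow> real)) \<Rightarrow> bool" where
  "weak_homogeneous M A B x \<longleftrightarrow>
     (\<forall>S\<in>sets A. \<forall>X\<in>Linf M B.
        AE \<omega> in M. x (\<lambda>t. indicator S t * X t) \<omega> = indicator S \<omega> * x X \<omega>)"

definition homogeneous ::
  "'a measure \<Rightarrow> 'a measure \<Rightarrow> 'a measure \<Rightarrow> (('a \<Rightarrow> real) \<Rightarrow> ('a \<Rightarrow> real)) \<Rightarrow> bool" where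
  "homogeneous M A B x \<longleftrightarrow>
     (\<forall>f\<in>Linf_pos M A. \<forall>X\<in>Linf M B.
        AE \<omega> in M. x (\<lambda>t. f t * X t) \<omega> = f \<omega> * x X \<omega>)"

definition cont_from_above ::
  "'a measure \<Rightarrow> 'a measure \<Rightarrow> (('a \<Rightarrow> real) \<Rightarrow> ('a \<Rightarrow> real)) \<Rightarrow> bool" where
  "cont_from_above M B x \<longleftrightarrow>
     (\<forall>Xs X. (\<forall>n. Xs n \<in> Linf M B) \<longrightarrow> X \<in> Linf M B \<longrightarrow>
        (AE \<omega> in M. decseq (\<lambda>n. Xs n \<omega>) \<and> (\<lambda>n. Xs n \<omega>) \<longlonglongrightarrow> X \<omega>) \<longrightarrow>
        (AE \<omega> in M. decseq (\<lambda>n. x (Xs n) \<omega>) \<and> (\<lambda>n. x (Xs n) \<omega>) \<longlonglongrightarrow> x X \<omega>))"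

end

theory Submission
  imports Defs
begin

text \<open>A monotone linear operator is Lipschitz for the essential sup-distance:
  \<open>|X - Y| \<le> e\<close> a.s. gives \<open>|x X - x Y| \<le> e x(1)\<close> a.s.
  Weak homogeneity lets indicators of events in \<open>\<A>\<close> be pulled out of \<open>x\<close>; by linearity
  so can \<open>\<A>\<close>-simple functions, and a bounded nonnegative \<open>\<A>\<close>-measurable \<open>f\<close> is the uniform
  limit of the simple functions \<open>\<lfloor>n f\<rfloor> / n\<close>, so the Lipschitz bound carries
  \<open>x(f X) = f x(X)\<close> over to \<open>f\<close>.\<close>

lemma Linf_const [simp]: "(\<lambda>t. c) \<in> Linf M F"
  unfolding Linf_def by (auto intro!: exI[of _ "\<bar>c\<bar>"])

lemma Linf_bounded:
  assumes "X \<in> Linf M F"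
  obtains C where "0 \<le> C" and "AE \<omega> in M. \<bar>X \<omega>\<bar> \<le> C"
proof -
  obtain C where "AE \<omega> in M. \<bar>X \<omega>\<bar> \<le> C" using assms unfolding Linf_def by auto
  then have "AE \<omega> in M. \<bar>X \<omega>\<bar> \<le> \<bar>C\<bar>" by eventually_elim auto
  then show thesis by (rule that[rotated]) simp
qed

lemma Linf_measurable: "X \<in> Linf M F \<Longrightarrow> X \<in> borel_measurable F"
  unfolding Linf_def by simp

lemma Linf_add:
  assumes "X \<in> Linf M F" and "Y \<in> Linf M F"
  shows "(\<lambda>t. X t + Y t) \<in> Linf M F"
proof -
  obtain CX CY where "AE \<omega> in M. \<bar>X \<omega>\<bar> \<le> CX" and "AE \<omega> in M. \<bar>Y \<omega>\<bar> \<le> CY"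
    using assms by (metis Linf_bounded)
  then have "AE \<omega> in M. \<bar>X \<omega> + Y \<omega>\<bar> \<le> CX + CY" by eventually_elim auto
  moreover have "(\<lambda>t. X t + Y t) \<in> borel_measurable F"
    using assms[THEN Linf_measurable] by measurable
  ultimately show ?thesis unfolding Linf_def by blast
qed

lemma Linf_mult:
  assumes "X \<in> Linf M F" and "Y \<in> Linf M F"
  shows "(\<lambda>t. X t * Y t) \<in> Linf M F"
proof -
  obtain CX CY where "AE \<omega> in M. \<bar>X \<omega>\<bar> \<le> CX" and "AE \<omega> in M. \<bar>Y \<omega>\<bar> \<le> CY"
    using assms by (metis Linf_bounded)
  then have "AE \<omega> in M. \<bar>X \<omega> * Y \<omega>\<bar> \<le> CX * CY"
    by eventually_elim (auto simp: abs_mult intro: mult_mono)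
  moreover have "(\<lambda>t. X t * Y t) \<in> borel_measurable F"
    using assms[THEN Linf_measurable] by measurable
  ultimately show ?thesis unfolding Linf_def by blast
qed

lemma Linf_cmult: "X \<in> Linf M F \<Longrightarrow> (\<lambda>t. a * X t) \<in> Linf M F"
  using Linf_mult[OF Linf_const] .

lemma Linf_sum:
  assumes "\<And>k. k \<in> I \<Longrightarrow> X k \<in> Linf M F"
  shows "(\<lambda>t. \<Sum>k\<in>I. X k t) \<in> Linf M F"
  using assms by (induction I rule: infinite_finite_induct) (auto intro: Linf_add)

lemma Linf_indicator: "S \<in> sets F \<Longrightarrow> indicator S \<in> Linf M F"
  unfolding Linf_def by (auto intro!: exI[of _ 1] simp: indicator_def)

lemma Linf_subalgebra: "subalgebra B A \<Longrightarrow> X \<in> Linf M A \<Longrightarrow> X \<in> Linf M B"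
  unfolding Linf_def using measurable_from_subalg by blast

lemma sum_step_eq_min_floor:
  fixes y :: real
  assumes "0 \<le> y"
  shows "(\<Sum>k<N. if real (Suc k) \<le> y then 1 else 0::real) = real (min N (nat \<lfloor>y\<rfloor>))"
proof (induction N)
  case (Suc N)
  have "real (Suc N) \<le> y \<longleftrightarrow> Suc N \<le> nat \<lfloor>y\<rfloor>"
    using assms by (simp add: le_nat_iff le_floor_iff)
  then show ?case using Suc by (auto simp: min_def)
qed simp

definition homogeneous_factor ::
  "'a measure \<Rightarrow> 'a measure \<Rightarrow> (('a \<Rightarrow> real) \<Rightarrow> ('a \<Rightarrow> real)) \<Rightarrow> ('a \<Rightarrow> real) \<Rightarrow> bool" where
  "homogeneous_factor M B x g \<longleftrightarrow>
     (\<forall>X\<in>Linf M B. AE \<omega> in M. x (\<lambda>t. g t * X t) \<omega> = g \<omega> * x X \<omega>)"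

lemma homogeneous_factor_indicator:
  "weak_homogeneous M A B x \<Longrightarrow> S \<in> sets A \<Longrightarrow> homogeneous_factor M B x (indicator S)"
  unfolding weak_homogeneous_def homogeneous_factor_def by blast

locale monotone_linear_Linf_op =
  fixes M A B :: "'a measure" and x :: "('a \<Rightarrow> real) \<Rightarrow> ('a \<Rightarrow> real)"
  assumes subalgebra_B: "subalgebra M B" and subalgebra_A: "subalgebra B A"
    and operator: "Linf_operator M A B x"
    and linear: "linear_op M B x"
    and monotone: "monotone_op M B x"
begin

lemma space_A: "space A = space M"
  using subalgebra_A subalgebra_B by (simp add: subalgebra_def)

lemma x_Linf: "X \<in> Linf M B \<Longrightarrow> x X \<in> Linf M A"
  using operator unfolding Linf_operator_def by blast

lemma x_AE_cong:
  "X \<in> Linf M B \<Longrightarrow> Y \<in> Linf M B \<Longrightarrow> AE \<omega> in M. X \<omega> = Y \<omega> \<Longrightarrow> AE \<omega> in M. x X \<omega> = x Y \<omega>"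
  using operator unfolding Linf_operator_def by blast

lemma x_mono:
  "X \<in> Linf M B \<Longrightarrow> Y \<in> Linf M B \<Longrightarrow> AE \<omega> in M. X \<omega> \<le> Y \<omega> \<Longrightarrow> AE \<omega> in M. x X \<omega> \<le> x Y \<omega>"
  using monotone unfolding monotone_op_def by blast

lemma x_lincomb:
  "X \<in> Linf M B \<Longrightarrow> Y \<in> Linf M B \<Longrightarrow>
    AE \<omega> in M. x (\<lambda>t. a * X t + b * Y t) \<omega> = a * x X \<omega> + b * x Y \<omega>"
  using linear unfolding linear_op_def by blast

lemma x_add:
  "X \<in> Linf M B \<Longrightarrow> Y \<in> Linf M B \<Longrightarrow> AE \<omega> in M. x (\<lambda>t. X t + Y t) \<omega> = x X \<omega> + x Y \<omega>"
  using x_lincomb[of X Y 1 1] by simp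

lemma x_cmult: "X \<in> Linf M B \<Longrightarrow> AE \<omega> in M. x (\<lambda>t. a * X t) \<omega> = a * x X \<omega>"
  using x_lincomb[of X X a 0] by simp

lemma x_add_const:
  "X \<in> Linf M B \<Longrightarrow> AE \<omega> in M. x (\<lambda>t. X t + c) \<omega> = x X \<omega> + c * x (\<lambda>t. 1) \<omega>"
  using x_lincomb[of X "\<lambda>t. 1" 1 c] by simp

lemma x_lipschitz:
  assumes X: "X \<in> Linf M B" and Y: "Y \<in> Linf M B"
    and dist: "AE \<omega> in M. \<bar>X \<omega> - Y \<omega>\<bar> \<le> e"
  shows "AE \<omega> in M. \<bar>x X \<omega> - x Y \<omega>\<bar> \<le> e * x (\<lambda>t. 1) \<omega>"
proof -
  have "AE \<omega> in M. X \<omega> \<le> Y \<omega> + e" "AE \<omega> in M. Y \<omega> \<le> X \<omega> + e"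
    using dist by (auto elim!: AE_mp)
  then have "AE \<omega> in M. x X \<omega> \<le> x (\<lambda>t. Y t + e) \<omega>" "AE \<omega> in M. x Y \<omega> \<le> x (\<lambda>t. X t + e) \<omega>"
    using x_mono[OF X Linf_add[OF Y Linf_const]] x_mono[OF Y Linf_add[OF X Linf_const]] by auto
  then show ?thesis using x_add_const[OF X, of e] x_add_const[OF Y, of e]
    by eventually_elim (simp add: abs_le_iff)
qed

lemma homogeneous_factor_add:
  assumes "homogeneous_factor M B x g" "homogeneous_factor M B x h"
    and g: "g \<in> Linf M B" and h: "h \<in> Linf M B"
  shows "homogeneous_factor M B x (\<lambda>t. g t + h t)"
  unfolding homogeneous_factor_def
proof
  fix X assume X: "X \<in> Linf M B"
  have "AE \<omega> in M. x (\<lambda>t. g t * X t) \<omega> = g \<omega> * x X \<omega>"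
    and "AE \<omega> in M. x (\<lambda>t. h t * X t) \<omega> = h \<omega> * x X \<omega>"
    using assms(1,2) X unfolding homogeneous_factor_def by auto
  moreover have "(\<lambda>t. (g t + h t) * X t) = (\<lambda>t. g t * X t + h t * X t)"
    by (simp add: algebra_simps)
  ultimately show "AE \<omega> in M. x (\<lambda>t. (g t + h t) * X t) \<omega> = (g \<omega> + h \<omega>) * x X \<omega>"
    using x_add[OF Linf_mult[OF g X] Linf_mult[OF h X]]
    by (auto elim!: AE_mp simp: algebra_simps)
qed

lemma homogeneous_factor_cmult:
  assumes "homogeneous_factor M B x g" and g: "g \<in> Linf M B"
  shows "homogeneous_factor M B x (\<lambda>t. a * g t)"
  unfolding homogeneous_factor_def
proof
  fix X assume X: "X \<in> Linf M B"
  show "AE \<omega> in M. x (\<lambda>t. a * g t * X t) \<omega> = a * g \<omega> * x X \<omega>"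
    using x_cmult[OF Linf_mult[OF g X], of a] assms(1) X
    unfolding homogeneous_factor_def by (auto elim!: AE_mp simp: mult.assoc)
qed

lemma homogeneous_factor_sum:
  assumes "\<And>k. k \<in> I \<Longrightarrow> homogeneous_factor M B x (g k)" and "\<And>k. k \<in> I \<Longrightarrow> g k \<in> Linf M B"
  shows "homogeneous_factor M B x (\<lambda>t. \<Sum>k\<in>I. g k t)"
  using assms
proof (induction I rule: infinite_finite_induct)
  case (insert k I)
  then show ?case by (simp add: homogeneous_factor_add Linf_sum)
qed (simp_all add: homogeneous_factor_def x_cmult[of _ 0, simplified])

lemma homogeneous_factor_uniform_limit:
  assumes factor: "\<And>n. homogeneous_factor M B x (g n)" and g: "\<And>n. g n \<in> Linf M B"
    and h: "h \<in> Linf M B"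
    and approx: "\<And>n. AE t in M. \<bar>g n t - h t\<bar> \<le> d n" and d: "d \<longlonglongrightarrow> 0"
  shows "homogeneous_factor M B x h"
  unfolding homogeneous_factor_def
proof
  fix X assume X: "X \<in> Linf M B"
  obtain CX where CX: "0 \<le> CX" "AE \<omega> in M. \<bar>X \<omega>\<bar> \<le> CX" using X by (rule Linf_bounded)
  obtain K where K: "AE \<omega> in M. \<bar>x (\<lambda>t. 1) \<omega>\<bar> \<le> K"
    using x_Linf[OF Linf_const] by (rule Linf_bounded)
  have hX: "(\<lambda>t. h t * X t) \<in> Linf M B" using Linf_mult[OF h X] .
  have "AE \<omega> in M. \<bar>g n \<omega> * x X \<omega> - x (\<lambda>t. h t * X t) \<omega>\<bar> \<le> d n * CX * K" for n
  proof -
    have "AE \<omega> in M. \<bar>g n \<omega> * X \<omega> - h \<omega> * X \<omega>\<bar> \<le> d n * CX"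
      using approx[of n] CX(2)
      by eventually_elim (auto simp: abs_mult left_diff_distrib[symmetric] intro: mult_mono)
    from x_lipschitz[OF Linf_mult[OF g X] hX this]
    have "AE \<omega> in M. \<bar>x (\<lambda>t. g n t * X t) \<omega> - x (\<lambda>t. h t * X t) \<omega>\<bar> \<le> d n * CX * K"
      using approx[of n] K
    proof eventually_elim
      case (elim \<omega>)
      then have "d n * CX * x (\<lambda>t. 1) \<omega> \<le> d n * CX * K"
        using CX(1) by (intro mult_left_mono) auto
      with elim show ?case by linarith
    qed
    moreover have "AE \<omega> in M. x (\<lambda>t. g n t * X t) \<omega> = g n \<omega> * x X \<omega>"
      using factor[of n] X unfolding homogeneous_factor_def by auto
    ultimately show ?thesis by eventually_elim simp
  qed
  then have "AE \<omega> in M. \<forall>n. \<bar>g n \<omega> * x X \<omega> - x (\<lambda>t. h t * X t) \<omega>\<bar> \<le> d n * CX * K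
                         \<and> \<bar>g n \<omega> - h \<omega>\<bar> \<le> d n"
    using approx by (simp add: AE_all_countable AE_conj_iff)
  then show "AE \<omega> in M. x (\<lambda>t. h t * X t) \<omega> = h \<omega> * x X \<omega>"
  proof eventually_elim
    case (elim \<omega>)
    let ?c = "\<bar>x X \<omega>\<bar> + CX * K"
    have "\<bar>h \<omega> * x X \<omega> - x (\<lambda>t. h t * X t) \<omega>\<bar> \<le> d n * ?c" for n
    proof -
      have "\<bar>h \<omega> * x X \<omega> - g n \<omega> * x X \<omega>\<bar> \<le> d n * \<bar>x X \<omega>\<bar>"
        using elim by (auto simp: abs_mult left_diff_distrib[symmetric] abs_minus_commute
            intro: mult_right_mono)
      moreover have "\<bar>g n \<omega> * x X \<omega> - x (\<lambda>t. h t * X t) \<omega>\<bar> \<le> d n * CX * K"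
        using elim by blast
      ultimately show ?thesis by (simp add: distrib_left mult.assoc)
    qed
    moreover have "(\<lambda>n. d n * ?c) \<longlonglongrightarrow> 0" using tendsto_mult_left_zero[OF d] .
    ultimately have "\<bar>h \<omega> * x X \<omega> - x (\<lambda>t. h t * X t) \<omega>\<bar> \<le> 0"
      by (intro LIMSEQ_le_const) auto
    then show ?case by simp
  qed
qed

lemma homogeneous_factor_nonneg_bounded:
  assumes weak: "weak_homogeneous M A B x" and g: "g \<in> borel_measurable A"
    and g_nonneg: "\<And>t. 0 \<le> g t" and g_le: "\<And>t. g t \<le> C"
  shows "homogeneous_factor M B x g"
proof -
  define m where "m n = real (Suc n)" for n
  define S where "S n k = {t \<in> space A. real (Suc k) \<le> m n * g t}" for n k
  define s where "s n t = (\<Sum>k<nat \<lceil>m n * C\<rceil>. inverse (m n) * indicator (S n k) t)" for n t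
  have S: "S n k \<in> sets A" for n k unfolding S_def using g by measurable
  have indicator_S: "indicator (S n k) \<in> Linf M B" for n k
    using Linf_subalgebra[OF subalgebra_A Linf_indicator[OF S]] .
  have "\<bar>g t\<bar> \<le> C" for t using g_nonneg[of t] g_le[of t] by simp
  then have g_Linf: "g \<in> Linf M B"
    using g by (intro Linf_subalgebra[OF subalgebra_A]) (auto simp: Linf_def)
  have "\<bar>s n t - g t\<bar> \<le> inverse (m n)" if t: "t \<in> space M" for n t
  proof -
    have m: "0 < m n" by (simp add: m_def)
    have y: "0 \<le> m n * g t" "m n * g t \<le> m n * C"
      using m g_nonneg g_le by (auto intro: mult_left_mono)
    then have "nat \<lfloor>m n * g t\<rfloor> \<le> nat \<lceil>m n * C\<rceil>"
      by (meson floor_le_ceiling floor_mono nat_mono order_trans)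
    moreover have "indicator (S n k) t = (if real (Suc k) \<le> m n * g t then 1 else 0::real)" for k
      using t space_A by (simp add: S_def indicator_def)
    ultimately have count: "(\<Sum>k<nat \<lceil>m n * C\<rceil>. indicator (S n k) t) = real (nat \<lfloor>m n * g t\<rfloor>)"
      by (simp only: sum_step_eq_min_floor[OF y(1)] min_absorb2)
    have "s n t - g t = inverse (m n) * (of_int \<lfloor>m n * g t\<rfloor> - m n * g t)"
      using m y(1) by (simp add: s_def count flip: sum_distrib_left) (simp add: algebra_simps)
    moreover have "\<bar>of_int \<lfloor>m n * g t\<rfloor> - m n * g t\<bar> \<le> 1"
      using of_int_floor_le[of "m n * g t"] real_of_int_floor_add_one_gt[of "m n * g t"] by linarith
    ultimately show ?thesis using m by (simp add: abs_mult mult_left_le)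
  qed
  then have approx: "AE t in M. \<bar>s n t - g t\<bar> \<le> inverse (real (Suc n))" for n
    by (auto simp: m_def)
  have factor: "homogeneous_factor M B x (s n)" for n
    unfolding s_def using indicator_S
    by (intro homogeneous_factor_sum homogeneous_factor_cmult homogeneous_factor_indicator[OF weak] S
        Linf_cmult)
  have s_Linf: "s n \<in> Linf M B" for n
    unfolding s_def using indicator_S by (intro Linf_sum Linf_cmult)
  show ?thesis
    using factor s_Linf g_Linf approx LIMSEQ_inverse_real_of_nat by (rule homogeneous_factor_uniform_limit)
qed

lemma homogeneous_factor_AE_cong:
  assumes "homogeneous_factor M B x h" and g: "g \<in> Linf M B" and h: "h \<in> Linf M B"
    and g_h: "AE \<omega> in M. g \<omega> = h \<omega>"
  shows "homogeneous_factor M B x g"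
  unfolding homogeneous_factor_def
proof
  fix X assume X: "X \<in> Linf M B"
  have "AE \<omega> in M. x (\<lambda>t. g t * X t) \<omega> = x (\<lambda>t. h t * X t) \<omega>"
    using g_h by (intro x_AE_cong Linf_mult g h X) (auto elim!: AE_mp)
  moreover have "AE \<omega> in M. x (\<lambda>t. h t * X t) \<omega> = h \<omega> * x X \<omega>"
    using assms(1) X unfolding homogeneous_factor_def by blast
  ultimately show "AE \<omega> in M. x (\<lambda>t. g t * X t) \<omega> = g \<omega> * x X \<omega>"
    using g_h by eventually_elim simp
qed

lemma homogeneous_factor_Linf_pos:
  assumes weak: "weak_homogeneous M A B x" and f: "f \<in> Linf_pos M A"
  shows "homogeneous_factor M B x f"
proof -
  have f_A: "f \<in> Linf M A" and "AE \<omega> in M. 0 \<le> f \<omega>" using f by (auto simp: Linf_pos_def)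
  obtain C where "0 \<le> C" "AE \<omega> in M. \<bar>f \<omega>\<bar> \<le> C" using f_A by (rule Linf_bounded)
  define f' where "f' t = min C (max 0 (f t))" for t
  have f_f': "AE \<omega> in M. f \<omega> = f' \<omega>"
    using \<open>AE \<omega> in M. 0 \<le> f \<omega>\<close> \<open>AE \<omega> in M. \<bar>f \<omega>\<bar> \<le> C\<close>
    by eventually_elim (auto simp: f'_def)
  have f'_A: "f' \<in> borel_measurable A"
    using Linf_measurable[OF f_A] unfolding f'_def by measurable
  have f'_bounds: "0 \<le> f' t" "f' t \<le> C" for t
    using \<open>0 \<le> C\<close> by (auto simp: f'_def)
  then have f'_Linf: "f' \<in> Linf M B"
    using f'_A by (intro Linf_subalgebra[OF subalgebra_A]) (auto simp: Linf_def)
  have "homogeneous_factor M B x f'"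
    using weak f'_A f'_bounds by (rule homogeneous_factor_nonneg_bounded)
  then show ?thesis
    using Linf_subalgebra[OF subalgebra_A f_A] f'_Linf f_f' by (rule homogeneous_factor_AE_cong)
qed

end

theorem lemma3p7:
  fixes M A B :: "'a measure" and x :: "('a \<Rightarrow> real) \<Rightarrow> ('a \<Rightarrow> real)"
  assumes "prob_space M" and "complete_measure M"
    and "subalgebra M A" and "subalgebra M B" and "sets A \<subseteq> sets B"
    and "Linf_operator M A B x"
    and "weak_homogeneous M A B x"
    and "monotone_op M B x"
    and "linear_op M B x"
    and "cont_from_above M B x"
  shows "homogeneous M A B x"
proof -
  have "subalgebra B A" using assms(3-5) by (simp add: subalgebra_def)
  then interpret monotone_linear_Linf_op M A B x
    using assms(4,6,8,9) by unfold_locales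
  show ?thesis
    using homogeneous_factor_Linf_pos[OF assms(7)]
    unfolding homogeneous_def homogeneous_factor_def by blast
qed

end
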